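(* Let $p(z)$ be an admissible polynomial of degree at most $n-1$ and let $L(p(z))\subset S$ be the saturated segment ideal with respect to the lex order with Hilbert polynomial $p(z)$. Then $L(p(z))$ is a gen-segment ideal with respect to the revlex order if and only if $\deg p(z)\le1$ or $L(p(z))$ has at most two minimal generators of degree $>1$.
   Context: $S=K[x_0,\dots,x_n]$, $K$ algebraically closed of characteristic $0$, standard grading, $x_0<x_1<\dots<x_n$; $\mathbb T_t$ is the set of terms of degree $t$. Lex order: for terms of the same degree, $x^\alpha\prec x^\beta$ iff $\alpha_k<\beta_k$ where $k=\max\{i:\alpha_i\ne\beta_i\}$. Revlex order: $x^\alpha\prec x^\beta$ iff $\alpha_h>\beta_h$ where $h=\min\{i:\alpha_i\neq\beta_i\}$. Given a term order, $B\subseteq\mathbb T_t$ is a segment if $\tau\in B$, $\tau'\in\mathbb T_t$, $\tau'\succ\tau$ imply $\tau'\in B$; a monomial ideal is a segment ideal if all its degree components are segments. For every admissible polynomial $p(z)$ of degree $\le n-1$ there is a unique saturated lex segment ideal $L(p(z))$ with Hilbert polynomial $p(z)$. A nonzero saturated Borel ideal $I$ is a gen-segment ideal w.r.t. $\preceq$ if for every $s$, whenever $\tau$ is a minimal monomial generator of degree $s$ and $\tau'\in\mathbb T_s$ is not in the ideal generated by $I_{s-1}$ with $\tau'\succ\tau$, then $\tau'$ is also a minimal generator of $I$. *)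

theory Defs
  imports "HOL-Computational_Algebra.Polynomial"
begin

text \<open>Terms of S = K[x_0,...,x_n] are encoded by exponent vectors
  a :: nat \<Rightarrow> nat with a i = 0 for i > n. Monomial ideals are encoded by
  their sets of terms.\<close>

definition terms :: "nat \<Rightarrow> (nat \<Rightarrow> nat) set" where
  "terms n = {a. \<forall>i>n. a i = 0}"

definition tdeg :: "nat \<Rightarrow> (nat \<Rightarrow> nat) \<Rightarrow> nat" where
  "tdeg n a = (\<Sum>i\<le>n. a i)"

definition tdvd :: "(nat \<Rightarrow> nat) \<Rightarrow> (nat \<Rightarrow> nat) \<Rightarrow> bool" where
  "tdvd a b \<longleftrightarrow> (\<forall>i. a i \<le> b i)"

definition monomial_ideal :: "nat \<Rightarrow> (nat \<Rightarrow> nat) set \<Rightarrow> bool" where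
  "monomial_ideal n I \<longleftrightarrow> I \<subseteq> terms n \<and>
     (\<forall>a\<in>I. \<forall>b\<in>terms n. (\<lambda>i. a i + b i) \<in> I)"

definition min_gen :: "(nat \<Rightarrow> nat) set \<Rightarrow> (nat \<Rightarrow> nat) \<Rightarrow> bool" where
  "min_gen I a \<longleftrightarrow> a \<in> I \<and> (\<forall>b\<in>I. tdvd b a \<longrightarrow> b = a)"

text \<open>Hilbert function of S/I in degree t.\<close>
definition hilb :: "nat \<Rightarrow> (nat \<Rightarrow> nat) set \<Rightarrow> nat \<Rightarrow> nat" where
  "hilb n I t = card {a \<in> terms n. tdeg n a = t \<and> a \<notin> I}"

definition hilbert_poly :: "nat \<Rightarrow> (nat \<Rightarrow> nat) set \<Rightarrow> rat poly \<Rightarrow> bool" where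
  "hilbert_poly n I p \<longleftrightarrow> (\<exists>t0. \<forall>t\<ge>t0. of_nat (hilb n I t) = poly p (of_nat t))"

text \<open>Admissible polynomial: Hilbert polynomial of S/J for some homogeneous
  ideal J; by Groebner degeneration equivalently for some monomial ideal J.\<close>
definition admissible :: "nat \<Rightarrow> rat poly \<Rightarrow> bool" where
  "admissible n p \<longleftrightarrow> (\<exists>J. monomial_ideal n J \<and> hilbert_poly n J p)"

text \<open>Saturation: I : m^infinity = I (for monomial ideals).\<close>
definition saturated :: "nat \<Rightarrow> (nat \<Rightarrow> nat) set \<Rightarrow> bool" where
  "saturated n I \<longleftrightarrow> (\<forall>a\<in>terms n.
     (\<exists>k. \<forall>b\<in>terms n. tdeg n b = k \<longrightarrow> (\<lambda>i. a i + b i) \<in> I) \<longrightarrow> a \<in> I)"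

text \<open>Borel-fixed (strongly stable) with x_0 < x_1 < ... < x_n:
  if tau in I, x_j divides tau, j < i \<le> n, then x_i tau / x_j in I.\<close>
definition borel :: "nat \<Rightarrow> (nat \<Rightarrow> nat) set \<Rightarrow> bool" where
  "borel n I \<longleftrightarrow> (\<forall>a\<in>I. \<forall>i j. j < i \<and> i \<le> n \<and> a j > 0 \<longrightarrow>
     (\<lambda>k. if k = j then a k - 1 else if k = i then a k + 1 else a k) \<in> I)"

text \<open>Strict orders: less a b means a \<prec> b.\<close>
definition lex_less :: "(nat \<Rightarrow> nat) \<Rightarrow> (nat \<Rightarrow> nat) \<Rightarrow> bool" where
  "lex_less a b \<longleftrightarrow> (\<exists>k. a k < b k \<and> (\<forall>i>k. a i = b i))"

definition revlex_less :: "(nat \<Rightarrow> nat) \<Rightarrow> (nat \<Rightarrow> nat) \<Rightarrow> bool" where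
  "revlex_less a b \<longleftrightarrow> (\<exists>h. a h > b h \<and> (\<forall>i<h. a i = b i))"

definition segment_ideal ::
    "((nat \<Rightarrow> nat) \<Rightarrow> (nat \<Rightarrow> nat) \<Rightarrow> bool) \<Rightarrow> nat \<Rightarrow> (nat \<Rightarrow> nat) set \<Rightarrow> bool" where
  "segment_ideal lt n I \<longleftrightarrow> monomial_ideal n I \<and>
     (\<forall>a\<in>I. \<forall>b\<in>terms n. tdeg n b = tdeg n a \<and> lt a b \<longrightarrow> b \<in> I)"

text \<open>Terms of degree s in the ideal generated by I_{s-1}.\<close>
definition in_gen_prev :: "nat \<Rightarrow> (nat \<Rightarrow> nat) set \<Rightarrow> nat \<Rightarrow> (nat \<Rightarrow> nat) \<Rightarrow> bool" where
  "in_gen_prev n I s a \<longleftrightarrow> (\<exists>b\<in>I. tdeg n b + 1 = s \<and> tdvd b a)"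

definition gen_segment ::
    "((nat \<Rightarrow> nat) \<Rightarrow> (nat \<Rightarrow> nat) \<Rightarrow> bool) \<Rightarrow> nat \<Rightarrow> (nat \<Rightarrow> nat) set \<Rightarrow> bool" where
  "gen_segment lt n I \<longleftrightarrow> monomial_ideal n I \<and> I \<noteq> {} \<and> saturated n I \<and> borel n I \<and>
     (\<forall>s a b. min_gen I a \<and> tdeg n a = s \<and> b \<in> terms n \<and> tdeg n b = s \<and>
        \<not> in_gen_prev n I s b \<and> lt a b \<longrightarrow> min_gen I b)"

end

theory Submission
  imports Defs "HOL-Library.FuncSet"
begin

(* A saturated lex-segment ideal L is determined by one term: if c is the
   lex-least term of L not divisible by x_0, then L consists exactly of the terms whose
   x_0-free part is not lex-smaller than c (lemma saturated_lex_segment_eq).  For this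
   ideal lex_ideal n c everything is explicit: its minimal generators are c and the
   terms lex_gen c w = x_w * (x_w^c_w ... x_n^c_n) for w beyond the first variable of c
   (min_gen_lex_ideal_iff).  Both sides of the theorem are then governed by a single
   combinatorial condition, "c is gapped": c involves two variables x_j, x_m with
   1 <= j and m >= j + 2.
     - If c is not gapped, lex_ideal n c is a revlex gen-segment ideal and has at most
       two minimal generators of degree > 1.
     - If c is gapped, the gen-segment property fails, there are at least three
       generators of degree > 1, and all terms in x_0, x_1, x_2 avoid the ideal, so a
       Hilbert-function lower bound forces deg p >= 2.
   The same lower bound (with all variables) shows L is nonempty when deg p <= n - 1. *)

section \<open>The lex order\<close>

lemma lex_irrefl: "\<not> lex_less a a"
  by (auto simp: lex_less_def)

lemma lex_trans:
  assumes "lex_less a b" "lex_less b c"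
  shows "lex_less a c"
proof -
  obtain k1 k2 where h1: "a k1 < b k1" "\<forall>i>k1. a i = b i"
    and h2: "b k2 < c k2" "\<forall>i>k2. b i = c i"
    using assms unfolding lex_less_def by blast
  let ?k = "max k1 k2"
  have "a ?k < c ?k"
    using h1 h2 by (cases k1 k2 rule: linorder_cases) (auto simp: max_def)
  moreover have "\<forall>i>?k. a i = c i" using h1(2) h2(2) by simp
  ultimately show ?thesis unfolding lex_less_def by blast
qed

lemma lex_asym: "lex_less a b \<Longrightarrow> \<not> lex_less b a"
  using lex_trans lex_irrefl by blast

text \<open>Two different exponent vectors that agree beyond n are lex-comparable:
  compare them at the largest index where they differ.\<close>
lemma lex_total:
  assumes "\<forall>i>n. a i = b i" "a \<noteq> b"
  shows "lex_less a b \<or> lex_less b a"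
proof -
  let ?D = "{i. a i \<noteq> b i}"
  have fin: "finite ?D"
    by (rule finite_subset[of _ "{..n}"]) (use assms(1) in \<open>auto simp: not_less[symmetric]\<close>)
  have ne: "?D \<noteq> {}" using assms(2) by auto
  define w where "w = Max ?D"
  have w: "a w \<noteq> b w" using Max_in[OF fin ne] w_def by simp
  have up: "\<forall>i>w. a i = b i"
    using Max_ge[OF fin] unfolding w_def by (metis (mono_tags) mem_Collect_eq not_le)
  show ?thesis
  proof (cases "a w < b w")
    case True then show ?thesis using up unfolding lex_less_def by blast
  next
    case False then have "b w < a w" using w by simp
    then show ?thesis using up unfolding lex_less_def by (metis (no_types))
  qed
qed

text \<open>Within a fixed number of variables every nonempty set of terms has a lex-minimal
  element; by induction on n, minimising first the last exponent.\<close>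
lemma lex_min_exists:
  "S \<subseteq> terms n \<Longrightarrow> S \<noteq> {} \<Longrightarrow> \<exists>c\<in>S. \<forall>b\<in>S. \<not> lex_less b c"
proof (induction n arbitrary: S)
  case 0
  obtain a where "a \<in> S" using 0 by auto
  then obtain c where c: "c \<in> S" "\<forall>y\<in>S. c 0 \<le> y 0"
    using ex_has_least_nat[of "\<lambda>x. x \<in> S" a "\<lambda>x. x 0"] by blast
  have "\<not> lex_less b c" if "b \<in> S" for b
  proof
    assume "lex_less b c"
    then obtain k where k: "b k < c k" unfolding lex_less_def by blast
    have "c k = 0" if "k \<noteq> 0" using that 0(1) c(1) by (auto simp: terms_def)
    then have "k = 0" using k by (metis less_zeroE)
    then show False using k c(2) \<open>b \<in> S\<close> by fastforce
  qed
  then show ?case using c(1) by blast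
next
  case (Suc n)
  obtain a where "a \<in> S" using Suc by auto
  then obtain a0 where a0: "a0 \<in> S" "\<forall>y\<in>S. a0 (Suc n) \<le> y (Suc n)"
    using ex_has_least_nat[of "\<lambda>x. x \<in> S" a "\<lambda>x. x (Suc n)"] by blast
  define S1 where "S1 = {x\<in>S. x (Suc n) = a0 (Suc n)}"
  define T where "T = (\<lambda>x. x(Suc n := 0)) ` S1"
  have "T \<subseteq> terms n" using Suc.prems(1) unfolding T_def S1_def terms_def by auto
  moreover have "T \<noteq> {}" unfolding T_def S1_def using a0 by auto
  ultimately obtain c' where c': "c' \<in> T" "\<forall>b\<in>T. \<not> lex_less b c'" using Suc.IH by blast
  then obtain c where c: "c \<in> S1" "c' = c(Suc n := 0)" unfolding T_def by auto
  have "\<not> lex_less b c" if b: "b \<in> S" for b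
  proof
    assume "lex_less b c"
    then obtain k where k: "b k < c k" "\<forall>i>k. b i = c i" unfolding lex_less_def by blast
    have cS: "c \<in> S" and cmu: "c (Suc n) = a0 (Suc n)" using c S1_def by auto
    consider "k > Suc n" | "k = Suc n" | "k < Suc n" by linarith
    then show False
    proof cases
      case 1 then show ?thesis using k b Suc.prems(1) cS by (auto simp: terms_def)
    next
      case 2 then show ?thesis using k a0 b cmu by (metis leD)
    next
      case 3
      then have "b(Suc n := 0) \<in> T" unfolding T_def S1_def using b k cmu by auto
      moreover have "lex_less (b(Suc n := 0)) c'" unfolding lex_less_def c(2)
        using k 3 by (intro exI[of _ k]) auto
      ultimately show ?thesis using c' by blast
    qed
  qed
  then show ?case using c S1_def by blast
qed

section \<open>Terms and degrees\<close>

lemma terms_zero: "a \<in> terms n \<Longrightarrow> n < i \<Longrightarrow> a i = 0"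
  by (auto simp: terms_def)

lemma terms_le_closed:
  assumes "\<forall>i. b i \<le> c i" "c \<in> terms n"
  shows "b \<in> terms n"
  unfolding terms_def
proof (intro CollectI allI impI)
  fix i assume "n < i"
  then show "b i = 0" using assms(1) terms_zero[OF assms(2)] by (metis le_0_eq)
qed

lemma tdeg_add: "tdeg n (\<lambda>i. a i + b i) = tdeg n a + tdeg n b"
  by (simp add: tdeg_def sum.distrib)

lemma exponent_le_tdeg: "i \<le> n \<Longrightarrow> a i \<le> tdeg n a"
  unfolding tdeg_def by (rule member_le_sum) auto

lemma two_exponents_le_tdeg: "i \<le> n \<Longrightarrow> l \<le> n \<Longrightarrow> i \<noteq> l \<Longrightarrow> a i + a l \<le> tdeg n a"
proof -
  assume "i \<le> n" "l \<le> n" "i \<noteq> l"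
  have "(\<Sum>x\<in>{i,l}. a x) \<le> (\<Sum>x\<le>n. a x)"
    by (rule sum_mono2) (use \<open>i \<le> n\<close> \<open>l \<le> n\<close> in auto)
  then show ?thesis using \<open>i \<noteq> l\<close> by (simp add: tdeg_def)
qed

lemma tdeg_less_of_proper_divisor:
  assumes "b \<in> terms n" "\<forall>i. a i \<le> b i" "a \<noteq> b"
  shows "tdeg n a < tdeg n b"
proof -
  obtain i where "a i \<noteq> b i" using assms(3) by blast
  then have "a i < b i" using assms(2) le_neq_implies_less by blast
  moreover have "i \<le> n" using calculation terms_zero[OF assms(1), of i] by (cases "n < i") auto
  ultimately show ?thesis unfolding tdeg_def
    by (intro sum_strict_mono_ex1) (use assms(2) in auto)
qed

lemma lex_less_of_proper_divisor:
  assumes "\<forall>i. b i \<le> c i" "b \<noteq> c" "c \<in> terms n"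
  shows "lex_less b c"
proof -
  have "\<forall>i>n. b i = c i" using assms(1) terms_zero[OF assms(3)] by (metis le_0_eq)
  then have "lex_less b c \<or> lex_less c b" using lex_total[OF _ assms(2)] by blast
  moreover have "\<not> lex_less c b" using assms(1) unfolding lex_less_def by (auto simp: not_less[symmetric])
  ultimately show ?thesis by simp
qed

definition var_pow :: "nat \<Rightarrow> nat \<Rightarrow> nat \<Rightarrow> nat" where
  "var_pow l k = (\<lambda>i. if i = l then k else 0)"

lemma var_pow_terms: "l \<le> n \<Longrightarrow> var_pow l k \<in> terms n"
  unfolding terms_def var_pow_def by simp

lemma tdeg_var_pow: "l \<le> n \<Longrightarrow> tdeg n (var_pow l k) = k"
  unfolding tdeg_def var_pow_def by simp

lemma monomial_ideal_mult:
  "monomial_ideal n L \<Longrightarrow> a \<in> L \<Longrightarrow> b \<in> terms n \<Longrightarrow> (\<lambda>i. a i + b i) \<in> L"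
  unfolding monomial_ideal_def by blast

lemma monomial_ideal_dvd:
  assumes "monomial_ideal n L" "a \<in> L" "b \<in> terms n" "tdvd a b"
  shows "b \<in> L"
proof -
  have "(\<lambda>i. b i - a i) \<in> terms n" using assms(3) unfolding terms_def by simp
  moreover have "(\<lambda>i. a i + (b i - a i)) = b" using assms(4) unfolding tdvd_def by (intro ext) simp
  ultimately show ?thesis using monomial_ideal_mult[OF assms(1,2)] by metis
qed

section \<open>Saturated lex-segment ideals\<close>

definition dehom :: "(nat \<Rightarrow> nat) \<Rightarrow> nat \<Rightarrow> nat" where
  "dehom a = (\<lambda>i. if i = 0 then 0 else a i)"

lemma dehom_terms: "a \<in> terms n \<Longrightarrow> dehom a \<in> terms n"
  by (auto simp: terms_def dehom_def)

lemma dehom_id: "a 0 = 0 \<Longrightarrow> dehom a = a"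
  unfolding dehom_def by (rule ext) simp

lemma dehom_decomp: "(\<lambda>i. dehom a i + var_pow 0 (a 0) i) = a"
  by (rule ext) (simp add: dehom_def var_pow_def)

lemma tdeg_dehom: "tdeg n a = a 0 + tdeg n (dehom a)"
  using tdeg_add[of n "dehom a" "var_pow 0 (a 0)"] tdeg_var_pow[of 0 n "a 0"]
  by (simp add: dehom_decomp)

text \<open>In a saturated lex-segment ideal membership only depends on the x_0-free part:
  multiplying dehom a by any term of degree a 0 gives a term lex-above a.\<close>
lemma lex_segment_dehom_mem:
  assumes seg: "segment_ideal lex_less n L" and sat: "saturated n L" and a: "a \<in> terms n"
  shows "a \<in> L \<longleftrightarrow> dehom a \<in> L"
proof
  have mi: "monomial_ideal n L" using seg unfolding segment_ideal_def by blast
  assume "dehom a \<in> L"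
  from monomial_ideal_mult[OF mi this var_pow_terms[of 0 n "a 0"]] show "a \<in> L"
    by (simp add: dehom_decomp)
next
  have segp: "\<forall>a\<in>L. \<forall>b\<in>terms n. tdeg n b = tdeg n a \<and> lex_less a b \<longrightarrow> b \<in> L"
    using seg unfolding segment_ideal_def by blast
  assume aL: "a \<in> L"
  have "(\<lambda>i. dehom a i + b i) \<in> L" if b: "b \<in> terms n" "tdeg n b = a 0" for b
  proof -
    define s where "s = (\<lambda>i. dehom a i + b i)"
    have sT: "s \<in> terms n" using dehom_terms[OF a] b(1) unfolding s_def terms_def by simp
    have ds: "tdeg n s = tdeg n a" unfolding s_def tdeg_add using b(2) tdeg_dehom[of n a] by simp
    have "\<not> lex_less s a"
    proof
      assume "lex_less s a"
      then obtain k where k: "s k < a k" "\<forall>i>k. s i = a i" unfolding lex_less_def by blast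
      have k0: "k = 0" using k(1) unfolding s_def dehom_def by (cases "k = 0") auto
      have "\<forall>i. i \<noteq> 0 \<longrightarrow> b i = 0" using k(2) k0 unfolding s_def dehom_def by simp
      then have "tdeg n b = b 0" unfolding tdeg_def by (simp add: sum.atMost_shift)
      then show False using k(1) k0 b(2) unfolding s_def dehom_def by simp
    qed
    moreover have "\<forall>i>n. a i = s i" using a sT terms_zero by metis
    ultimately have "s = a \<or> lex_less a s" using lex_total by blast
    then have "s \<in> L" using segp aL sT ds by blast
    then show ?thesis unfolding s_def .
  qed
  then show "dehom a \<in> L" using sat dehom_terms[OF a] unfolding saturated_def by blast
qed

lemma lex_segment_dehom_up:
  assumes seg: "segment_ideal lex_less n L" and sat: "saturated n L"
    and aL: "a \<in> L" and b: "b \<in> terms n" and lt: "lex_less (dehom a) (dehom b)"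
  shows "b \<in> L"
proof -
  have mi: "monomial_ideal n L" using seg unfolding segment_ideal_def by blast
  have segp: "\<forall>a\<in>L. \<forall>b\<in>terms n. tdeg n b = tdeg n a \<and> lex_less a b \<longrightarrow> b \<in> L"
    using seg unfolding segment_ideal_def by blast
  have aT: "a \<in> terms n" using mi aL unfolding monomial_ideal_def by blast
  have kaL: "dehom a \<in> L" using lex_segment_dehom_mem[OF seg sat aT] aL by simp
  text \<open>Pad both x_0-free parts with powers of x_0 to a common degree.\<close>
  define a' where "a' = (\<lambda>i. dehom a i + var_pow 0 (tdeg n (dehom b)) i)"
  define b' where "b' = (\<lambda>i. dehom b i + var_pow 0 (tdeg n (dehom a)) i)"
  have a'L: "a' \<in> L" unfolding a'_def by (rule monomial_ideal_mult[OF mi kaL var_pow_terms]) simp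
  have b'T: "b' \<in> terms n"
    using dehom_terms[OF b] unfolding b'_def terms_def var_pow_def by simp
  have deg: "tdeg n b' = tdeg n a'" unfolding a'_def b'_def tdeg_add tdeg_var_pow[OF le0] by simp
  obtain k where k: "dehom a k < dehom b k" "\<forall>i>k. dehom a i = dehom b i"
    using lt unfolding lex_less_def by blast
  then have "k \<noteq> 0" by (cases "k = 0") (simp_all add: dehom_def)
  then have "lex_less a' b'"
    using k unfolding lex_less_def a'_def b'_def var_pow_def by (intro exI[of _ k]) simp
  then have "b' \<in> L" using segp a'L b'T deg by blast
  moreover have "dehom b' = dehom b" unfolding b'_def dehom_def var_pow_def by (rule ext) simp
  ultimately have "dehom b \<in> L" using lex_segment_dehom_mem[OF seg sat b'T] by simp
  then show ?thesis using lex_segment_dehom_mem[OF seg sat b] by simp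
qed

definition lex_ideal :: "nat \<Rightarrow> (nat \<Rightarrow> nat) \<Rightarrow> (nat \<Rightarrow> nat) set" where
  "lex_ideal n c = {a \<in> terms n. \<not> lex_less (dehom a) c}"

lemma lex_ideal_iff: "a \<in> lex_ideal n c \<longleftrightarrow> a \<in> terms n \<and> \<not> lex_less (dehom a) c"
  by (simp add: lex_ideal_def)

text \<open>Structure theorem: every nonzero saturated lex-segment ideal is lex_ideal n c,
  with c the lex-least x_0-free part of an element.\<close>
lemma saturated_lex_segment_eq:
  assumes seg: "segment_ideal lex_less n L" and sat: "saturated n L" and ne: "L \<noteq> {}"
  obtains c where "c \<in> terms n" "c 0 = 0" "L = lex_ideal n c"
proof -
  have LT: "L \<subseteq> terms n" using seg unfolding segment_ideal_def monomial_ideal_def by blast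
  then have "dehom ` L \<subseteq> terms n" using dehom_terms by blast
  then obtain c where c: "c \<in> dehom ` L" "\<forall>b\<in>dehom ` L. \<not> lex_less b c"
    using lex_min_exists ne by blast
  then obtain c0 where c0: "c0 \<in> L" "c = dehom c0" by blast
  have cT: "c \<in> terms n" using c0 LT dehom_terms by blast
  have c00: "c 0 = 0" using c0 by (simp add: dehom_def)
  have cL: "c \<in> L" using lex_segment_dehom_mem[OF seg sat, of c0] c0 LT by blast
  have "lex_ideal n c \<subseteq> L"
  proof
    fix a assume "a \<in> lex_ideal n c"
    then have aT: "a \<in> terms n" and nl: "\<not> lex_less (dehom a) c" unfolding lex_ideal_iff by auto
    have "\<forall>i>n. dehom a i = c i" using dehom_terms[OF aT] cT terms_zero by metis
    then have "dehom a = c \<or> lex_less (dehom c) (dehom a)"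
      using lex_total nl dehom_id[of c, OF c00] by metis
    then show "a \<in> L"
      using lex_segment_dehom_mem[OF seg sat aT] cL lex_segment_dehom_up[OF seg sat cL aT] by auto
  qed
  moreover have "L \<subseteq> lex_ideal n c" unfolding lex_ideal_def using c(2) LT by blast
  ultimately show ?thesis using that cT c00 by blast
qed

section \<open>The ideal lex_ideal n c\<close>

lemma lex_ideal_self: "c \<in> terms n \<Longrightarrow> c 0 = 0 \<Longrightarrow> c \<in> lex_ideal n c"
  by (simp add: lex_ideal_iff dehom_id lex_irrefl)

text \<open>Moving an exponent to a later variable increases the x_0-free part in lex order,
  so lex_ideal n c is Borel-fixed.\<close>
lemma borel_lex_ideal: "borel n (lex_ideal n c)"
  unfolding borel_def
proof (intro ballI allI impI)
  fix a i j assume aL: "a \<in> lex_ideal n c" and h: "j < i \<and> i \<le> n \<and> 0 < a j"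
  define b where "b = (\<lambda>k. if k = j then a k - 1 else if k = i then a k + 1 else a k)"
  have bT: "b \<in> terms n" using aL h unfolding lex_ideal_iff b_def terms_def by auto
  have "lex_less (dehom a) (dehom b)" unfolding lex_less_def
    using h by (intro exI[of _ i]) (auto simp: dehom_def b_def)
  moreover have "\<not> lex_less (dehom a) c" using aL lex_ideal_iff by blast
  ultimately have "\<not> lex_less (dehom b) c" using lex_trans by blast
  then show "b \<in> lex_ideal n c" using bT lex_ideal_iff by simp
qed

text \<open>The term x_w * x_w^(c w) * ... * x_n^(c n): the part of c from x_w on, times x_w.
  It is the lex-smallest x_0-free term above c that vanishes below w.\<close>
definition lex_gen :: "(nat \<Rightarrow> nat) \<Rightarrow> nat \<Rightarrow> nat \<Rightarrow> nat" where
  "lex_gen c w = (\<lambda>l. if w < l then c l else if l = w then c w + 1 else 0)"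

lemma lex_gen_terms: "w \<le> n \<Longrightarrow> c \<in> terms n \<Longrightarrow> lex_gen c w \<in> terms n"
  unfolding lex_gen_def terms_def by auto

lemma lex_gen_in_lex_ideal:
  assumes "0 < w" "w \<le> n" "c \<in> terms n"
  shows "lex_gen c w \<in> lex_ideal n c"
proof -
  have "lex_less c (lex_gen c w)"
    unfolding lex_less_def lex_gen_def by (intro exI[of _ w]) simp
  moreover have "dehom (lex_gen c w) = lex_gen c w"
    using assms(1) by (intro dehom_id) (simp add: lex_gen_def)
  ultimately show ?thesis using lex_gen_terms[OF assms(2,3)] lex_asym lex_ideal_iff by metis
qed

text \<open>Minimal generators of lex_ideal n c are x_0-free: dividing by x_0 keeps the
  x_0-free part.\<close>
lemma min_gen_lex_ideal_x0_free:
  assumes "min_gen (lex_ideal n c) a"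
  shows "a 0 = 0"
proof (rule ccontr)
  assume ne: "a 0 \<noteq> 0"
  have aL: "a \<in> lex_ideal n c" using assms min_gen_def by blast
  define a' where "a' = a(0 := a 0 - 1)"
  have le: "\<forall>i. a' i \<le> a i" unfolding a'_def by simp
  have "a' \<in> terms n" using terms_le_closed[OF le] aL lex_ideal_iff by blast
  moreover have "dehom a' = dehom a" unfolding a'_def dehom_def by (rule ext) simp
  ultimately have "a' \<in> lex_ideal n c" using aL lex_ideal_iff by simp
  then have "a' = a" using assms le unfolding min_gen_def tdvd_def by blast
  moreover have "a' 0 = a 0 - 1" unfolding a'_def by simp
  ultimately show False using ne by simp
qed

lemma min_gen_lex_ideal_self:
  assumes cT: "c \<in> terms n" and c0: "c 0 = 0"
  shows "min_gen (lex_ideal n c) c"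
  unfolding min_gen_def
proof (intro conjI ballI impI)
  show "c \<in> lex_ideal n c" using lex_ideal_self[OF cT c0] .
  fix b assume b: "b \<in> lex_ideal n c" "tdvd b c"
  have le: "\<forall>i. b i \<le> c i" using b(2) tdvd_def by blast
  then have "dehom b = b" using c0 by (intro dehom_id) (metis le_0_eq)
  then show "b = c"
    using b(1) lex_less_of_proper_divisor[OF le _ cT] lex_ideal_iff by metis
qed

lemma min_gen_lex_gen:
  assumes cT: "c \<in> terms n" and jw: "j < w" and cj: "0 < c j" and wn: "w \<le> n"
  shows "min_gen (lex_ideal n c) (lex_gen c w)"
  unfolding min_gen_def
proof (intro conjI ballI impI)
  have w0: "0 < w" using jw by simp
  show "lex_gen c w \<in> lex_ideal n c" using lex_gen_in_lex_ideal[OF w0 wn cT] .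
  fix b assume b: "b \<in> lex_ideal n c" "tdvd b (lex_gen c w)"
  show "b = lex_gen c w"
  proof (rule ccontr)
    assume ne: "b \<noteq> lex_gen c w"
    have le: "\<forall>i. b i \<le> lex_gen c w i" using b(2) tdvd_def by blast
    have lg: "lex_gen c w i = (if w < i then c i else if i = w then c w + 1 else 0)" for i
      by (simp add: lex_gen_def)
    have below: "b i = 0" if "i < w" for i using le[rule_format, of i] that lg[of i] by simp
    have up: "b i \<le> c i" if "w < i" for i using le[rule_format, of i] that lg[of i] by simp
    have "dehom b = b" using below w0 by (intro dehom_id) simp
    then have nl: "\<not> lex_less b c" using b(1) lex_ideal_iff by metis
    obtain l where l: "b l < lex_gen c w l" "\<forall>i>l. b i = lex_gen c w i"
      using lex_less_of_proper_divisor[OF le ne lex_gen_terms[OF wn cT]]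
      unfolding lex_less_def by blast
    have lw: "w \<le> l" using l(1) lg[of l] by (cases "w \<le> l") auto
    have above_l: "\<forall>i>l. b i = c i" using l(2) lw lg by simp
    consider "b l < c l" | "l = w" "b w = c w" using l(1) lw lg[of l] by (cases "w < l") (auto simp: less_Suc_eq)
    then show False
    proof cases
      case 1
      then show False using nl above_l unfolding lex_less_def by blast
    next
      case 2
      have "b i \<le> c i" for i using below up 2 by (cases i w rule: linorder_cases) auto
      moreover have "b \<noteq> c" using below[OF jw] cj by auto
      ultimately show False using nl lex_less_of_proper_divisor cT by blast
    qed
  qed
qed

lemma min_gen_lex_ideal_iff:
  assumes cT: "c \<in> terms n" and c0: "c 0 = 0"
  shows "min_gen (lex_ideal n c) a \<longleftrightarrow>
    a = c \<or> (\<exists>j w. j < w \<and> w \<le> n \<and> 0 < c j \<and> a = lex_gen c w)"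
proof
  assume mgen: "min_gen (lex_ideal n c) a"
  show "a = c \<or> (\<exists>j w. j < w \<and> w \<le> n \<and> 0 < c j \<and> a = lex_gen c w)"
  proof (cases "a = c")
    case ne: False
    have a0: "a 0 = 0" using min_gen_lex_ideal_x0_free[OF mgen] .
    have aL: "a \<in> lex_ideal n c" using mgen min_gen_def by blast
    then have aT: "a \<in> terms n" and nl: "\<not> lex_less a c"
      using dehom_id[of a, OF a0] lex_ideal_iff by auto
    have "\<forall>i>n. a i = c i" using aT cT unfolding terms_def by simp
    then have "lex_less c a" using lex_total[OF _ ne] nl by blast
    then obtain w where w: "c w < a w" "\<forall>i>w. c i = a i" unfolding lex_less_def by blast
    have w0: "0 < w" using w(1) a0 by (cases "w = 0") simp_all
    have wn: "w \<le> n" using w(1) terms_zero[OF aT, of w] by (cases "w \<le> n") simp_all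
    have lg: "lex_gen c w i = (if w < i then c i else if i = w then c w + 1 else 0)" for i
      by (simp add: lex_gen_def)
    text \<open>lex_gen c w divides a, hence equals it by minimality.\<close>
    have "lex_gen c w i \<le> a i" for i using w lg[of i] by (cases w i rule: linorder_cases) auto
    then have ga: "lex_gen c w = a"
      using mgen lex_gen_in_lex_ideal[OF w0 wn cT] unfolding min_gen_def tdvd_def by blast
    text \<open>If c involved no variable before x_w, then c would divide a as well.\<close>
    have "\<exists>j<w. 0 < c j"
    proof (rule ccontr)
      assume "\<not> (\<exists>j<w. 0 < c j)"
      then have "c i \<le> a i" for i using ga lg[of i] w(1) by (cases w i rule: linorder_cases) auto
      then have "c = a" using mgen lex_ideal_self[OF cT c0] unfolding min_gen_def tdvd_def by blast
      then show False using ne by simp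
    qed
    then show ?thesis using ga wn by blast
  qed simp
next
  assume "a = c \<or> (\<exists>j w. j < w \<and> w \<le> n \<and> 0 < c j \<and> a = lex_gen c w)"
  then show "min_gen (lex_ideal n c) a"
    using min_gen_lex_ideal_self[OF cT c0] min_gen_lex_gen[OF cT] by (elim disjE exE conjE) simp_all
qed

lemma min_gen_lex_ideal_dominates:
  assumes cT: "c \<in> terms n" and c0: "c 0 = 0"
    and mgen: "min_gen (lex_ideal n c) a" and ah: "0 < a h"
  shows "(\<forall>l>h. c l \<le> a l) \<and> (\<exists>j. 1 \<le> j \<and> j \<le> h \<and> 0 < c j)"
proof -
  consider "a = c" | j w where "j < w" "0 < c j" "a = lex_gen c w"
    using mgen min_gen_lex_ideal_iff[OF cT c0] by blast
  then show ?thesis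
  proof cases
    case 1
    have "1 \<le> h" using ah c0 1 by (cases h) auto
    then show ?thesis using ah 1 by (intro conjI exI[of _ h]) auto
  next
    case 2
    then have "w \<le> h" using ah unfolding lex_gen_def by (cases "w \<le> h") auto
    moreover have "1 \<le> j" using 2(2) c0 by (cases j) auto
    ultimately show ?thesis using 2 unfolding lex_gen_def by (intro conjI exI[of _ j]) auto
  qed
qed

section \<open>The gen-segment property\<close>

definition gapped :: "(nat \<Rightarrow> nat) \<Rightarrow> bool" where
  "gapped c \<longleftrightarrow> (\<exists>j m. 1 \<le> j \<and> j + 2 \<le> m \<and> 0 < c j \<and> 0 < c m)"

lemma min_gen_of_not_in_gen_prev:
  assumes mi: "monomial_ideal n L" and bL: "b \<in> L" and np: "\<not> in_gen_prev n L (tdeg n b) b"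
  shows "min_gen L b"
  unfolding min_gen_def
proof (intro conjI ballI impI)
  show "b \<in> L" by fact
  fix b' assume b': "b' \<in> L" "tdvd b' b"
  show "b' = b"
  proof (rule ccontr)
    assume ne: "b' \<noteq> b"
    have le: "\<forall>i. b' i \<le> b i" using b'(2) tdvd_def by blast
    obtain l where "b' l \<noteq> b l" using ne by blast
    then have lt: "b' l < b l" using le le_neq_implies_less by blast
    have bT: "b \<in> terms n" using mi bL monomial_ideal_def by blast
    have ln: "l \<le> n" using lt terms_zero[OF bT, of l] by (cases "l \<le> n") auto
    text \<open>Divide b by x_l: the quotient still lies in L and has degree one less.\<close>
    define q where "q = b(l := b l - 1)"
    have qT: "q \<in> terms n" using terms_le_closed[OF _ bT, of q] unfolding q_def by simp
    have "tdvd b' q" using le lt unfolding q_def tdvd_def by simp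
    then have qL: "q \<in> L" using monomial_ideal_dvd[OF mi b'(1) qT] by simp
    have "(\<lambda>i. q i + var_pow l 1 i) = b" unfolding q_def var_pow_def using lt by (intro ext) simp
    then have "tdeg n q + 1 = tdeg n b" using tdeg_add[of n q "var_pow l 1"] tdeg_var_pow[OF ln] by simp
    moreover have "tdvd q b" unfolding q_def tdvd_def by simp
    ultimately show False using np qL unfolding in_gen_prev_def by blast
  qed
qed

text \<open>Otherwise it would
  be a proper divisor of that generator.\<close>
lemma ungapped_revlex_above_min_gen:
  assumes ng: "\<not> gapped c" and cT: "c \<in> terms n" and c0: "c 0 = 0"
    and mgen: "min_gen (lex_ideal n c) a" and bT: "b \<in> terms n"
    and deg: "tdeg n b = tdeg n a" and rl: "revlex_less a b"
  shows "b \<in> lex_ideal n c"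
proof (rule ccontr)
  assume bL: "b \<notin> lex_ideal n c"
  have a0: "a 0 = 0" using min_gen_lex_ideal_x0_free[OF mgen] .
  have aT: "a \<in> terms n" using mgen lex_ideal_iff min_gen_def by blast
  obtain h where h: "b h < a h" "\<forall>i<h. a i = b i" using rl unfolding revlex_less_def by blast
  have "h \<noteq> 0" using h(1) a0 by (cases "h = 0") simp_all
  then have "dehom b = b" using h(2) a0 by (intro dehom_id) simp
  then have "lex_less b c" using bL bT lex_ideal_iff by simp
  then obtain w where w: "b w < c w" "\<forall>i>w. b i = c i" unfolding lex_less_def by blast
  have "0 < a h" using h(1) by simp
  then obtain j where dom: "\<forall>l>h. c l \<le> a l" and j: "1 \<le> j" "j \<le> h" "0 < c j"
    using min_gen_lex_ideal_dominates[OF cT c0 mgen] by blast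
  have "w \<le> h + 1"
  proof (rule ccontr)
    assume "\<not> w \<le> h + 1"
    then have "j + 2 \<le> w" using j(2) by simp
    moreover have "0 < c w" using w(1) by simp
    ultimately have "gapped c" unfolding gapped_def using j(1,3) by blast
    then show False using ng by simp
  qed
  have "b l \<le> a l" for l
  proof (cases l h rule: linorder_cases)
    case less then show ?thesis using h(2) by simp
  next
    case equal then show ?thesis using h(1) by simp
  next
    case greater
    then have cla: "c l \<le> a l" using dom by simp
    show ?thesis
    proof (cases "w < l")
      case True then show ?thesis using w(2) cla by simp
    next
      case False
      then have "l = w" using greater \<open>w \<le> h + 1\<close> by simp
      then show ?thesis using w(1) cla by simp
    qed
  qed
  moreover have "b \<noteq> a" using h(1) by auto
  ultimately have "tdeg n b < tdeg n a" using tdeg_less_of_proper_divisor[OF aT] by blast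
  then show False using deg by simp
qed

lemma ungapped_gen_segment:
  assumes ng: "\<not> gapped c" and cT: "c \<in> terms n" and c0: "c 0 = 0"
    and mi: "monomial_ideal n (lex_ideal n c)" and sat: "saturated n (lex_ideal n c)"
  shows "gen_segment revlex_less n (lex_ideal n c)"
  unfolding gen_segment_def
proof (intro conjI allI impI)
  show "lex_ideal n c \<noteq> {}" using lex_ideal_self[OF cT c0] by auto
  fix s a b
  assume H: "min_gen (lex_ideal n c) a \<and> tdeg n a = s \<and> b \<in> terms n \<and> tdeg n b = s \<and>
        \<not> in_gen_prev n (lex_ideal n c) s b \<and> revlex_less a b"
  then have "b \<in> lex_ideal n c" using ungapped_revlex_above_min_gen[OF ng cT c0] by auto
  then show "min_gen (lex_ideal n c) b" using min_gen_of_not_in_gen_prev[OF mi] H by auto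
qed (use mi sat borel_lex_ideal in auto)

text \<open>Key step of the negative direction: for gapped c (via x_j and x_m), moving one
  x_j and one x_m of c to two x_(j+1) gives a term revlex-above the generator c, not a
  multiple of anything of lower degree in the ideal, yet lex-below c.\<close>
lemma gapped_not_gen_segment:
  assumes gap: "gapped c" and cT: "c \<in> terms n" and c0: "c 0 = 0"
    and mi: "monomial_ideal n (lex_ideal n c)"
  shows "\<not> gen_segment revlex_less n (lex_ideal n c)"
proof
  assume gs: "gen_segment revlex_less n (lex_ideal n c)"
  obtain j m where jm: "1 \<le> j" "j + 2 \<le> m" "0 < c j" "0 < c m"
    using gap unfolding gapped_def by blast
  have mn: "m \<le> n" using jm(4) terms_zero[OF cT, of m] by (cases "m \<le> n") auto
  define b where "b = (\<lambda>i. if i = j then c j - 1 else if i = j + 1 then c (j + 1) + 2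
                     else if i = m then c m - 1 else c i)"
  have bT: "b \<in> terms n" using cT jm unfolding b_def terms_def by auto
  have jn: "j \<le> n" "j + 1 \<le> n" using jm mn by simp_all
  have "(\<lambda>i. (\<lambda>i. b i + var_pow j 1 i) i + var_pow m 1 i) = (\<lambda>i. c i + var_pow (j + 1) 2 i)"
    unfolding b_def var_pow_def using jm by (intro ext) auto
  moreover have "tdeg n (\<lambda>i. (\<lambda>i. b i + var_pow j 1 i) i + var_pow m 1 i) = tdeg n b + 2"
    unfolding tdeg_add using tdeg_var_pow jn mn by simp
  moreover have "tdeg n (\<lambda>i. c i + var_pow (j + 1) 2 i) = tdeg n c + 2"
    unfolding tdeg_add using tdeg_var_pow jn by simp
  ultimately have deg: "tdeg n b = tdeg n c" by simp
  have rl: "revlex_less c b" unfolding revlex_less_def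
    using jm by (intro exI[of _ j]) (auto simp: b_def)
  have "lex_less b c" unfolding lex_less_def
    using jm by (intro exI[of _ m]) (auto simp: b_def)
  moreover have "dehom b = b" using jm c0 by (intro dehom_id) (simp add: b_def)
  ultimately have bnot: "b \<notin> lex_ideal n c" using lex_ideal_iff by simp
  have "\<not> in_gen_prev n (lex_ideal n c) (tdeg n c) b"
    using bnot monomial_ideal_dvd[OF mi _ bT] unfolding in_gen_prev_def by blast
  moreover have "\<And>a b. min_gen (lex_ideal n c) a \<and> tdeg n a = tdeg n c \<and> b \<in> terms n \<and>
      tdeg n b = tdeg n c \<and> \<not> in_gen_prev n (lex_ideal n c) (tdeg n c) b \<and> revlex_less a b \<Longrightarrow>
      min_gen (lex_ideal n c) b"
    using gs unfolding gen_segment_def by blast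
  ultimately have "min_gen (lex_ideal n c) b"
    using min_gen_lex_ideal_self[OF cT c0] bT deg rl by blast
  then show False using bnot min_gen_def by blast
qed

section \<open>Counting minimal generators of degree > 1\<close>

lemma lex_gen_tdeg_gt_1:
  assumes "w \<le> n" "1 < tdeg n (lex_gen c w)"
  shows "\<exists>l\<ge>w. 0 < c l"
proof (rule ccontr)
  assume "\<not> (\<exists>l\<ge>w. 0 < c l)"
  then have "lex_gen c w = var_pow w 1" unfolding lex_gen_def var_pow_def by (intro ext) auto
  then show False using assms tdeg_var_pow by simp
qed

lemma finite_min_gen_lex_ideal:
  assumes cT: "c \<in> terms n" and c0: "c 0 = 0"
  shows "finite {a. min_gen (lex_ideal n c) a \<and> 1 < tdeg n a}"
proof (rule finite_subset)
  show "{a. min_gen (lex_ideal n c) a \<and> 1 < tdeg n a} \<subseteq> insert c (lex_gen c ` {..n})"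
    using min_gen_lex_ideal_iff[OF cT c0] by auto
qed simp

text \<open>If c is not gapped, a generator lex_gen c w of degree > 1 needs c to involve
  both x_(w-1) and x_w; two such w would make c gapped.\<close>
lemma ungapped_card_le_2:
  assumes ng: "\<not> gapped c" and cT: "c \<in> terms n" and c0: "c 0 = 0"
  shows "card {a. min_gen (lex_ideal n c) a \<and> 1 < tdeg n a} \<le> 2"
proof -
  define I where "I = {w. 2 \<le> w \<and> w \<le> n \<and> 0 < c w \<and> 0 < c (w - 1)}"
  have finI: "finite I" unfolding I_def by (rule finite_subset[of _ "{..n}"]) auto
  have sub: "{a. min_gen (lex_ideal n c) a \<and> 1 < tdeg n a} \<subseteq> insert c (lex_gen c ` I)"
  proof
    fix a assume "a \<in> {a. min_gen (lex_ideal n c) a \<and> 1 < tdeg n a}"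
    then have mgen: "min_gen (lex_ideal n c) a" and dg: "1 < tdeg n a" by auto
    show "a \<in> insert c (lex_gen c ` I)"
    proof (cases "a = c")
      case False
      then obtain j w where jw: "j < w" "w \<le> n" "0 < c j" "a = lex_gen c w"
        using mgen min_gen_lex_ideal_iff[OF cT c0] by blast
      have j1: "1 \<le> j" using jw(3) c0 by (cases j) auto
      obtain l where l: "w \<le> l" "0 < c l" using lex_gen_tdeg_gt_1[OF jw(2)] dg jw(4) by blast
      have "\<not> j + 2 \<le> l" using ng j1 jw(3) l(2) unfolding gapped_def by blast
      then have "w = j + 1" "l = w" using l(1) jw(1) by simp_all
      then have "w \<in> I" unfolding I_def using l(2) jw(2,3) j1 by simp
      then show ?thesis using jw(4) by simp
    qed simp
  qed
  have "\<not> (x \<in> I \<and> y \<in> I \<and> x < y)" for x y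
  proof
    assume "x \<in> I \<and> y \<in> I \<and> x < y"
    then have "gapped c" unfolding gapped_def I_def by (intro exI[of _ "x - 1"] exI[of _ y]) auto
    then show False using ng by simp
  qed
  then have "\<forall>x\<in>I. \<forall>y\<in>I. x = y" by (metis linorder_neqE_nat)
  then have "card I \<le> 1" using card_le_Suc0_iff_eq[OF finI] by simp
  then have "card (insert c (lex_gen c ` I)) \<le> 2"
    using card_insert_le_m1[of 2 "lex_gen c ` I" c] card_image_le[OF finI, of "lex_gen c"] by simp
  moreover have "finite (insert c (lex_gen c ` I))" using finI by simp
  ultimately show ?thesis using card_mono[OF _ sub] by (meson le_trans)
qed

text \<open>If c is gapped via x_j and x_m, then c, lex_gen c m and lex_gen c (j+1) are three
  distinct minimal generators of degree > 1.\<close>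
lemma gapped_card_ge_3:
  assumes gap: "gapped c" and cT: "c \<in> terms n" and c0: "c 0 = 0"
  shows "3 \<le> card {a. min_gen (lex_ideal n c) a \<and> 1 < tdeg n a}"
proof -
  obtain j m where jm: "1 \<le> j" "j + 2 \<le> m" "0 < c j" "0 < c m"
    using gap unfolding gapped_def by blast
  have mn: "m \<le> n" using jm(4) terms_zero[OF cT, of m] by (cases "m \<le> n") auto
  have d1: "1 < tdeg n c" using two_exponents_le_tdeg[of j n m c] jm mn by simp
  have d2: "1 < tdeg n (lex_gen c m)"
    using exponent_le_tdeg[of m n "lex_gen c m"] jm mn unfolding lex_gen_def by simp
  have d3: "1 < tdeg n (lex_gen c (j + 1))"
    using two_exponents_le_tdeg[of "j + 1" n m "lex_gen c (j + 1)"] jm mn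
    unfolding lex_gen_def by simp
  have g2: "min_gen (lex_ideal n c) (lex_gen c m)"
    and g3: "min_gen (lex_ideal n c) (lex_gen c (j + 1))"
    using min_gen_lex_gen[OF cT, of j] jm mn by auto
  have "c j \<noteq> lex_gen c m j" "c j \<noteq> lex_gen c (j + 1) j" "lex_gen c m m \<noteq> lex_gen c (j + 1) m"
    using jm unfolding lex_gen_def by auto
  then have "c \<noteq> lex_gen c m" "c \<noteq> lex_gen c (j + 1)" "lex_gen c m \<noteq> lex_gen c (j + 1)"
    by auto
  then have "card {c, lex_gen c m, lex_gen c (j + 1)} = 3" by simp
  moreover have "{c, lex_gen c m, lex_gen c (j + 1)} \<subseteq> {a. min_gen (lex_ideal n c) a \<and> 1 < tdeg n a}"
    using d1 d2 d3 g2 g3 min_gen_lex_ideal_self[OF cT c0] by simp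
  ultimately show ?thesis using card_mono[OF finite_min_gen_lex_ideal[OF cT c0]] by metis
qed

section \<open>Lower bounds for the degree of the Hilbert polynomial\<close>

lemma poly_le_abs_coeff_sum:
  fixes p :: "'a :: linordered_idom poly"
  assumes x1: "1 \<le> x" and dp: "degree p \<le> k"
  shows "poly p x \<le> (\<Sum>i\<le>degree p. \<bar>coeff p i\<bar>) * x ^ k"
proof -
  have "poly p x = (\<Sum>i\<le>degree p. coeff p i * x ^ i)" by (rule poly_altdef)
  also have "\<dots> \<le> (\<Sum>i\<le>degree p. \<bar>coeff p i\<bar> * x ^ k)"
  proof (rule sum_mono)
    fix i assume "i \<in> {..degree p}"
    then have "x ^ i \<le> x ^ k" using dp x1 by (intro power_increasing) auto
    have "coeff p i * x ^ i \<le> \<bar>coeff p i\<bar> * x ^ i"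
      using x1 by (intro mult_right_mono) auto
    also have "\<dots> \<le> \<bar>coeff p i\<bar> * x ^ k"
      using \<open>x ^ i \<le> x ^ k\<close> by (intro mult_left_mono) auto
    finally show "coeff p i * x ^ i \<le> \<bar>coeff p i\<bar> * x ^ k" .
  qed
  also have "\<dots> = (\<Sum>i\<le>degree p. \<bar>coeff p i\<bar>) * x ^ k" by (simp add: sum_distrib_right)
  finally show ?thesis .
qed

lemma degree_ge_of_growth:
  fixes p :: "'a :: archimedean_field poly" and h :: "nat \<Rightarrow> nat"
  assumes ev: "\<forall>t\<ge>t0. of_nat (h t) = poly p (of_nat t)" and d1: "1 \<le> d"
    and lb: "\<forall>N. (N + 1) ^ d \<le> h (d * N)"
  shows "d \<le> degree p"
proof (rule ccontr)
  assume "\<not> d \<le> degree p"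
  then have dp: "degree p \<le> d - 1" by simp
  define C where "C = (\<Sum>i\<le>degree p. \<bar>coeff p i\<bar>)"
  obtain n0 :: nat where n0: "C * of_nat d ^ (d - 1) < of_nat n0" using reals_Archimedean2 by blast
  define N where "N = t0 + 1 + n0"
  have N1: "1 \<le> N" unfolding N_def by simp
  have "t0 \<le> N" unfolding N_def by simp
  also have "N \<le> d * N" using d1 by simp
  finally have Nt: "t0 \<le> d * N" .
  have "(of_nat n0 :: 'a) \<le> of_nat N" unfolding N_def by simp
  with n0 have big: "C * of_nat d ^ (d - 1) < (of_nat N :: 'a)" by (rule order.strict_trans2)
  have "1 \<le> d * N" using mult_le_mono[OF d1 N1] by simp
  then have dN: "(1 :: 'a) \<le> of_nat (d * N)" using of_nat_le_iff[of 1 "d * N"] by simp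
  have "(of_nat ((N + 1) ^ d) :: 'a) \<le> of_nat (h (d * N))"
    using lb[rule_format, of N] by (simp only: of_nat_le_iff)
  also have "\<dots> = poly p (of_nat (d * N))" using ev Nt by blast
  also have "\<dots> \<le> C * (of_nat (d * N)) ^ (d - 1)"
    unfolding C_def using poly_le_abs_coeff_sum[OF dN dp] .
  also have "\<dots> = (C * of_nat d ^ (d - 1)) * (of_nat N) ^ (d - 1)"
    by (simp add: power_mult_distrib)
  also have "\<dots> < of_nat N * (of_nat N) ^ (d - 1)"
    using N1 by (intro mult_strict_right_mono[OF big]) simp
  also have "\<dots> = (of_nat N) ^ d" using power_Suc[of "of_nat N :: 'a" "d - 1"] d1 by simp
  also have "\<dots> \<le> (of_nat (N + 1)) ^ d" by (rule power_mono) simp_all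
  finally show False by (simp only: of_nat_power less_irrefl)
qed

lemma finite_terms_of_degree: "finite {a \<in> terms n. tdeg n a = t}"
proof (rule finite_subset)
  show "{a \<in> terms n. tdeg n a = t} \<subseteq>
      {f. \<forall>x. (x \<in> {..n} \<longrightarrow> f x \<in> {..t}) \<and> (x \<notin> {..n} \<longrightarrow> f x = 0)}"
  proof (intro subsetI CollectI allI conjI impI)
    fix a x assume a: "a \<in> {a \<in> terms n. tdeg n a = t}"
    show "x \<in> {..n} \<Longrightarrow> a x \<in> {..t}" using exponent_le_tdeg[of x n a] a by simp
    show "x \<notin> {..n} \<Longrightarrow> a x = 0" using a terms_zero[of a n x] by simp
  qed
  show "finite {f. \<forall>x. (x \<in> {..n} \<longrightarrow> f x \<in> {..t}) \<and> (x \<notin> {..n} \<longrightarrow> f x = 0)}"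
    by (rule finite_set_of_finite_funs) simp_all
qed

text \<open>There are at least (N+1)^d terms of degree d*N in x_0, ..., x_d: choose the
  exponents of x_1, ..., x_d in {0..N} freely and fill up with x_0.\<close>
lemma card_terms_in_first_vars:
  assumes d1: "1 \<le> d" and dn: "d \<le> n"
  shows "(N + 1) ^ d \<le> card {a \<in> terms n. tdeg n a = d * N \<and> (\<forall>i>d. a i = 0)}"
proof -
  define F where "F = PiE {1..d} (\<lambda>_. {0..N})"
  have cF: "card F = (N + 1) ^ d" unfolding F_def by (simp add: card_PiE)
  define fill where "fill f = (\<lambda>i. if i = 0 then d * N - sum f {1..d} else if i \<le> d then f i else 0)"
    for f :: "nat \<Rightarrow> nat"
  have inj: "inj_on fill F"
  proof (rule inj_onI)
    fix f g assume fg: "f \<in> F" "g \<in> F" "fill f = fill g"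
    show "f = g"
    proof (rule PiE_ext[OF fg(1)[unfolded F_def] fg(2)[unfolded F_def]])
      fix i assume i: "i \<in> {1..d}"
      have "fill f i = fill g i" using fg(3) by simp
      then show "f i = g i" using i unfolding fill_def by simp
    qed
  qed
  have img: "fill ` F \<subseteq> {a \<in> terms n. tdeg n a = d * N \<and> (\<forall>i>d. a i = 0)}"
  proof
    fix a assume "a \<in> fill ` F"
    then obtain f where f: "f \<in> F" "a = fill f" by blast
    have "\<And>i. i \<in> {1..d} \<Longrightarrow> f i \<le> N" using f(1) unfolding F_def by auto
    then have "sum f {1..d} \<le> d * N" using sum_bounded_above[of "{1..d}" f N] by simp
    have "tdeg n a = (\<Sum>i\<le>n. (if i = 0 then d * N - sum f {1..d} else 0)
        + (if i \<in> {1..d} then f i else 0))"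
      unfolding tdeg_def f(2) fill_def by (rule sum.cong) auto
    also have "\<dots> = (d * N - sum f {1..d}) + (\<Sum>i\<le>n. if i \<in> {1..d} then f i else 0)"
      by (simp add: sum.distrib)
    also have "(\<Sum>i\<le>n. if i \<in> {1..d} then f i else 0) = sum f ({..n} \<inter> {1..d})"
      by (rule sum.inter_restrict[symmetric]) simp
    also have "{..n} \<inter> {1..d} = {1..d}" using dn by auto
    finally have "tdeg n a = d * N" using \<open>sum f {1..d} \<le> d * N\<close> by simp
    then show "a \<in> {a \<in> terms n. tdeg n a = d * N \<and> (\<forall>i>d. a i = 0)}"
      using dn unfolding f(2) fill_def terms_def by simp
  qed
  have fin: "finite {a \<in> terms n. tdeg n a = d * N \<and> (\<forall>i>d. a i = 0)}"
    by (rule finite_subset[OF _ finite_terms_of_degree[of n "d * N"]]) auto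
  show ?thesis using card_inj_on_le[OF inj img fin] cF by simp
qed

lemma hilbert_poly_degree_ge:
  assumes hp: "hilbert_poly n I p" and d1: "1 \<le> d" and dn: "d \<le> n"
    and avoid: "\<And>a. a \<in> terms n \<Longrightarrow> \<forall>i>d. a i = 0 \<Longrightarrow> a \<notin> I"
  shows "d \<le> degree p"
proof -
  obtain t0 where ev: "\<forall>t\<ge>t0. of_nat (hilb n I t) = poly p (of_nat t)"
    using hp unfolding hilbert_poly_def by blast
  have "(N + 1) ^ d \<le> hilb n I (d * N)" for N
  proof -
    have "{a \<in> terms n. tdeg n a = d * N \<and> (\<forall>i>d. a i = 0)} \<subseteq>
        {a \<in> terms n. tdeg n a = d * N \<and> a \<notin> I}" using avoid by blast
    then have "card {a \<in> terms n. tdeg n a = d * N \<and> (\<forall>i>d. a i = 0)} \<le> hilb n I (d * N)"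
      unfolding hilb_def
      by (intro card_mono finite_subset[OF _ finite_terms_of_degree[of n "d * N"]]) auto
    then show ?thesis using card_terms_in_first_vars[OF d1 dn, of N] by simp
  qed
  then show ?thesis using degree_ge_of_growth[OF ev d1] by blast
qed

text \<open>Terms not involving the variables from x_m on lie outside lex_ideal n c when c
  involves x_m: their x_0-free part is lex-below c.\<close>
lemma lex_ideal_avoids:
  assumes cT: "c \<in> terms n" and cm: "0 < c m"
    and aT: "a \<in> terms n" and az: "\<forall>i\<ge>m. a i = 0"
  shows "a \<notin> lex_ideal n c"
proof -
  have am: "dehom a m = 0" using az by (simp add: dehom_def)
  then have "dehom a \<noteq> c" using cm by auto
  moreover have "\<forall>i>n. dehom a i = c i" using dehom_terms[OF aT] cT terms_zero by metis
  moreover have "\<not> lex_less c (dehom a)"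
  proof
    assume "lex_less c (dehom a)"
    then obtain w where w: "c w < dehom a w" "\<forall>i>w. c i = dehom a i" unfolding lex_less_def by blast
    have "w < m"
    proof (rule ccontr)
      assume "\<not> w < m"
      then have "dehom a w = 0" using az by (simp add: dehom_def)
      then show False using w(1) by simp
    qed
    then show False using w(2) am cm by simp
  qed
  ultimately have "lex_less (dehom a) c" using lex_total by blast
  then show ?thesis using lex_ideal_iff by simp
qed

lemma gapped_degree_ge_2:
  assumes gap: "gapped c" and cT: "c \<in> terms n" and hp: "hilbert_poly n (lex_ideal n c) p"
  shows "2 \<le> degree p"
proof -
  obtain j m where jm: "1 \<le> j" "j + 2 \<le> m" "0 < c m" using gap unfolding gapped_def by blast
  have "m \<le> n" using jm(3) terms_zero[OF cT, of m] by (cases "m \<le> n") auto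
  then show ?thesis
    using jm lex_ideal_avoids[OF cT jm(3)] by (intro hilbert_poly_degree_ge[OF hp]) auto
qed

theorem mainTheorem9:
  fixes n :: nat and p :: "rat poly" and L :: "(nat \<Rightarrow> nat) set"
  assumes "admissible n p"
    and "int (degree p) \<le> int n - 1"
    and "segment_ideal lex_less n L"
    and "saturated n L"
    and "hilbert_poly n L p"
  shows "gen_segment revlex_less n L \<longleftrightarrow>
           (degree p \<le> 1 \<or> card {a. min_gen L a \<and> tdeg n a > 1} \<le> 2)"
proof -
  have n1: "1 \<le> n" and dpn: "\<not> n \<le> degree p" using assms(2) by simp_all
  have mi: "monomial_ideal n L" using assms(3) unfolding segment_ideal_def by blast
  have "L \<noteq> {}"
    using hilbert_poly_degree_ge[OF assms(5) n1 order_refl] dpn by blast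
  then obtain c where cT: "c \<in> terms n" and c0: "c 0 = 0" and Lc: "L = lex_ideal n c"
    using saturated_lex_segment_eq[OF assms(3,4)] by blast
  show ?thesis
  proof (cases "gapped c")
    case True
    have "\<not> gen_segment revlex_less n L" using gapped_not_gen_segment[OF True cT c0] mi Lc by simp
    moreover have "3 \<le> card {a. min_gen L a \<and> tdeg n a > 1}"
      using gapped_card_ge_3[OF True cT c0] Lc by simp
    moreover have "2 \<le> degree p" using gapped_degree_ge_2[OF True cT] assms(5) Lc by simp
    ultimately show ?thesis by linarith
  next
    case False
    then show ?thesis
      using ungapped_gen_segment[OF False cT c0] ungapped_card_le_2[OF False cT c0]
        mi assms(4) Lc by simp
  qed
qed

end
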